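(* Let $L/K$ be a vast extension of fields of characteristic $0$, and let $K'/K$ be a finite extension which is disjoint from $L/K$. Then the extension $LK'/K'$ is vast.
   Context: All fields lie in a fixed algebraic closure and have characteristic zero. Two algebraic extensions of $K$ are disjoint over $K$ if they are linearly disjoint over $K$. An algebraic extension $L/K$ is called vast if $L \neq K$ and for every finite extension $E/K$ there exists a subfield $M$ of $L$ with $M \supsetneq K$ such that $M$ and $E$ are disjoint over $K$. *)

theory Defs
  imports "HOL-Computational_Algebra.Polynomial"
begin

text \<open>All fields are subfields of an ambient algebraically closed field of
characteristic zero (the type 'a).\<close>

definition alg_closed_type :: "'a::field itself \<Rightarrow> bool" where
  "alg_closed_type _ \<longleftrightarrow> (\<forall>p::'a poly. degree p > 0 \<longrightarrow> (\<exists>x. poly p x = 0))"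

definition is_subfield :: "'a::field set \<Rightarrow> bool" where
  "is_subfield F \<longleftrightarrow> 0 \<in> F \<and> 1 \<in> F \<and>
     (\<forall>x\<in>F. \<forall>y\<in>F. x + y \<in> F \<and> x - y \<in> F \<and> x * y \<in> F) \<and>
     (\<forall>x\<in>F. x \<noteq> 0 \<longrightarrow> inverse x \<in> F)"

definition lin_indep_over :: "'a::field set \<Rightarrow> 'a set \<Rightarrow> bool" where
  "lin_indep_over K S \<longleftrightarrow>
     (\<forall>T c. finite T \<longrightarrow> T \<subseteq> S \<longrightarrow> (\<forall>x\<in>T. c x \<in> K) \<longrightarrow>
        (\<Sum>x\<in>T. c x * x) = 0 \<longrightarrow> (\<forall>x\<in>T. c x = 0))"

definition span_over :: "'a::field set \<Rightarrow> 'a set \<Rightarrow> 'a set" where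
  "span_over K S = {\<Sum>x\<in>T. c x * x | T c. finite T \<and> T \<subseteq> S \<and> (\<forall>x\<in>T. c x \<in> K)}"

definition field_ext :: "'a::field set \<Rightarrow> 'a set \<Rightarrow> bool" where
  "field_ext K L \<longleftrightarrow> is_subfield K \<and> is_subfield L \<and> K \<subseteq> L"

definition finite_ext :: "'a::field set \<Rightarrow> 'a set \<Rightarrow> bool" where
  "finite_ext K E \<longleftrightarrow> field_ext K E \<and> (\<exists>B. finite B \<and> B \<subseteq> E \<and> span_over K B = E)"

definition algebraic_over :: "'a::field set \<Rightarrow> 'a \<Rightarrow> bool" where
  "algebraic_over K x \<longleftrightarrow> (\<exists>p::'a poly. p \<noteq> 0 \<and> (\<forall>i. coeff p i \<in> K) \<and> poly p x = 0)"

definition algebraic_ext :: "'a::field set \<Rightarrow> 'a set \<Rightarrow> bool" where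
  "algebraic_ext K L \<longleftrightarrow> field_ext K L \<and> (\<forall>x\<in>L. algebraic_over K x)"

definition lin_disjoint :: "'a::field set \<Rightarrow> 'a set \<Rightarrow> 'a set \<Rightarrow> bool" where
  "lin_disjoint K E L \<longleftrightarrow> (\<forall>S. S \<subseteq> E \<longrightarrow> lin_indep_over K S \<longrightarrow> lin_indep_over L S)"

definition compositum :: "'a::field set \<Rightarrow> 'a set \<Rightarrow> 'a set" where
  "compositum A B = \<Inter>{F. is_subfield F \<and> A \<union> B \<subseteq> F}"

definition vast :: "'a::field set \<Rightarrow> 'a set \<Rightarrow> bool" where
  "vast K L \<longleftrightarrow> algebraic_ext K L \<and> L \<noteq> K \<and>
     (\<forall>E. finite_ext K E \<longrightarrow>
        (\<exists>M. is_subfield M \<and> K \<subset> M \<and> M \<subseteq> L \<and> lin_disjoint K M E))"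

end

theory Submission
  imports Defs "HOL-Algebra.Algebraic_Closure_Type"
begin

text \<open>Given a finite extension E of K', choose a proper subextension M of L/K disjoint from E
over K (E is finite over K as well) and an element a of M outside K. Since K(a) is disjoint from
E, the K-basis 1, a, ..., a^(d-1) of K(a) stays E-independent, where d = [K(a):K]; moreover
[K'(a):K'] \<le> d. A K'-basis of K'(a) thus has at most d elements but spans an E-space containing
d E-independent elements, so it is E-independent: K'(a) is disjoint from E over K'. Finally,
disjointness of K' and L gives K' \<inter> L = K, so a \<notin> K' and K'(a) is a proper subextension of
LK'/K'.\<close>

section \<open>Linear independence over nested subfields\<close>

lemma (in ring) Span_mono_field:
  assumes "K \<subseteq> F"
  shows "Span K Us \<subseteq> Span F Us"
proof (induction Us)
  case (Cons u Us)
  show ?case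
  proof
    fix x
    assume "x \<in> Span K (u # Us)"
    then obtain k v where "k \<in> K" "v \<in> Span K Us" "x = k \<otimes> u \<oplus> v"
      by (auto simp: line_extension_mem_iff)
    with Cons assms show "x \<in> Span F (u # Us)"
      by (auto simp: line_extension_mem_iff)
  qed
qed simp

lemma (in ring) independent_mono_field:
  assumes "K \<subseteq> F" and "independent F Us"
  shows "independent K Us"
  using assms(2)
proof (induction Us rule: list.induct)
  case (Cons u Us)
  then show ?case
    using independent_backwards[OF Cons.prems] Span_mono_field[OF assms(1), of Us]
    by (intro li_Cons) auto
qed simp

lemma (in ring) filter_base_length:
  assumes K: "subfield K R" and "set Us \<subseteq> carrier R"
  obtains Vs where "independent K Vs" "Span K Vs = Span K Us" "length Vs \<le> length Us"
    and "dependent K Us \<Longrightarrow> length Vs < length Us"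
proof -
  from \<open>set Us \<subseteq> carrier R\<close> have "\<exists>Vs. independent K Vs \<and> Span K Vs = Span K Us \<and>
      length Vs \<le> length Us \<and> (dependent K Us \<longrightarrow> length Vs < length Us)"
  proof (induction Us)
    case Nil
    then show ?case by auto
  next
    case (Cons u Us)
    then obtain Vs where Vs: "independent K Vs" "Span K Vs = Span K Us" "length Vs \<le> length Us"
      "dependent K Us \<longrightarrow> length Vs < length Us"
      by auto
    show ?case
    proof (cases "u \<in> Span K Us")
      case True
      then have "Span K (u # Us) = Span K Us"
        using Cons.prems Span_base_incl[OF K] mono_Span_subset[OF K] mono_Span_sublist[OF K]
        by (metis insert_subset list.simps(15) set_subset_Cons subset_antisym)
      then show ?thesis
        using Vs by (intro exI[of _ Vs]) auto
    next
      case False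
      then have "independent K (u # Vs)" "Span K (u # Vs) = Span K (u # Us)"
        using Cons.prems Vs(1,2) by (auto intro: li_Cons)
      moreover have "dependent K (u # Us) \<Longrightarrow> dependent K Us"
        using False Cons.prems li_Cons by auto
      ultimately show ?thesis
        using Vs(3,4) by (intro exI[of _ "u # Vs"]) auto
    qed
  qed
  then show thesis
    using that by blast
qed

lemma (in ring) independent_if_Span_contains_independent:
  assumes K: "subfield K R" and Us: "set Us \<subseteq> carrier R"
    and Vs: "independent K Vs" "set Vs \<subseteq> Span K Us" and "length Us \<le> length Vs"
  shows "independent K Us"
proof (rule ccontr)
  assume "dependent K Us"
  then obtain Ws where "independent K Ws" "Span K Ws = Span K Us" "length Ws < length Us"
    using filter_base_length[OF K Us] by metis
  moreover from this have "length Vs \<le> length Ws"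
    using independent_length_le[OF K Vs(1)] Vs(2) by simp
  ultimately show False
    using \<open>length Us \<le> length Vs\<close> by simp
qed

lemma (in ring) independent_over_superfield:
  assumes K: "subfield K R" and E: "subfield E R" and "K \<subseteq> E"
    and V: "dimension n K V"
    and Ps: "independent E Ps" "set Ps \<subseteq> V" "n \<le> length Ps"
    and Us: "independent K Us" "set Us \<subseteq> V"
  shows "independent E Us"
proof -
  obtain Ws where base: "length (Ws @ Us) = n" "independent K (Ws @ Us)" "Span K (Ws @ Us) = V"
    using complete_base[OF K V Us] by blast
  have "set Ps \<subseteq> Span E (Ws @ Us)"
    using Ps(2) base(3) Span_mono_field[OF \<open>K \<subseteq> E\<close>] by blast
  then have "independent E (Ws @ Us)"
    using independent_if_Span_contains_independent[OF E independent_in_carrier[OF base(2)] Ps(1)]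
      base(1) Ps(3) by simp
  then show ?thesis
    by (rule independent_split(1)[OF E])
qed

lemma (in domain) degree_Irr_mono:
  assumes K: "subfield K R" and K': "subfield K' R" and "K \<subseteq> K'"
    and x: "x \<in> carrier R" "(algebraic over K) x"
  shows "degree (Irr K' x) \<le> degree (Irr K x)"
proof -
  have alg': "(algebraic over K') x"
    using algebraic_mono[OF \<open>K \<subseteq> K'\<close> x(2)] .
  have "carrier (K[X]) \<subseteq> carrier (K'[X])"
    using \<open>K \<subseteq> K'\<close> unfolding univ_poly_def polynomial_def by auto
  then have Irr: "Irr K x \<in> carrier (K'[X])"
    using IrrE(1)[OF K x] by blast
  have "Irr K x \<noteq> []"
    using IrrE(2)[OF K x] unfolding ring_irreducible_def univ_poly_zero by auto
  moreover have "Irr K' x pdivides Irr K x"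
    using Irr_minimal[OF K' x(1) alg' Irr IrrE(4)[OF K x]] .
  ultimately show ?thesis
    using pdivides_imp_degree_le[OF subfieldE(1)[OF K'] IrrE(1)[OF K' x(1) alg'] Irr] by blast
qed

lemma (in domain) simple_extension_independent_over_superfield:
  assumes K: "subfield K R" and K': "subfield K' R" and E: "subfield E R"
    and "K \<subseteq> K'" "K' \<subseteq> E" and x: "x \<in> carrier R" "(algebraic over K) x"
    and disjoint: "\<And>Vs. set Vs \<subseteq> simple_extension K x \<Longrightarrow> independent K Vs \<Longrightarrow> independent E Vs"
    and Us: "independent K' Us" "set Us \<subseteq> simple_extension K' x"
  shows "independent E Us"
proof -
  define Ps where "Ps = exp_base x (degree (Irr K x))"
  have Ps: "independent K Ps"
    unfolding Ps_def by (rule exp_base_independent[OF K x])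
  have Ps_K: "set Ps \<subseteq> simple_extension K x"
    using Span_base_incl[OF K independent_in_carrier[OF Ps]] Span_exp_base[OF K x]
    unfolding Ps_def by simp
  then have "independent E Ps"
    using disjoint Ps by blast
  moreover have "set Ps \<subseteq> simple_extension K' x"
    using Ps_K mono_simple_extension[OF \<open>K \<subseteq> K'\<close>] by blast
  moreover have "dimension (degree (Irr K' x)) K' (simple_extension K' x)"
    using dimension_simple_extension[OF K' x(1) algebraic_mono[OF \<open>K \<subseteq> K'\<close> x(2)]] .
  moreover have "degree (Irr K' x) \<le> length Ps"
    using degree_Irr_mono[OF K K' \<open>K \<subseteq> K'\<close> x] by (simp add: Ps_def exp_base_def)
  ultimately show ?thesis
    using independent_over_superfield[OF K' E \<open>K' \<subseteq> E\<close>] Us by blast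
qed

section \<open>The ambient field as a HOL-Algebra ring\<close>

lemma ring_of_type_algebra_simps [simp]:
  "carrier (ring_of_type_algebra :: 'a::ring_1 ring) = UNIV"
  "mult (ring_of_type_algebra :: 'a::ring_1 ring) = (*)"
  "one (ring_of_type_algebra :: 'a::ring_1 ring) = 1"
  "zero (ring_of_type_algebra :: 'a::ring_1 ring) = 0"
  "add (ring_of_type_algebra :: 'a::ring_1 ring) = (+)"
  by (simp_all add: ring_of_type_algebra_def)

interpretation R: domain "ring_of_type_algebra :: 'a::field ring"
  using field_from_type_algebra by (rule field.axioms(1))

declare R.Span.simps[simp del]

lemma ring_of_type_algebra_a_inv [simp]: "a_inv ring_of_type_algebra x = - (x::'a::field)"
  using R.minus_equality[of "-x" x] by simp

lemma ring_of_type_algebra_pow [simp]: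
  "x [^]\<^bsub>ring_of_type_algebra\<^esub> (n::nat) = (x::'a::field) ^ n"
  by (induction n) auto

lemma ring_of_type_algebra_inv [simp]:
  "(x::'a::field) \<noteq> 0 \<Longrightarrow> inv\<^bsub>ring_of_type_algebra\<^esub> x = inverse x"
  using R.inv_char[of x "inverse x"] by simp

lemma is_subfield_iff_subfield:
  "is_subfield F \<longleftrightarrow> subfield F (ring_of_type_algebra :: 'a::field ring)"
proof
  assume F: "is_subfield F"
  have "- x \<in> F" if "x \<in> F" for x
    using F that unfolding is_subfield_def by (metis diff_0)
  then have "subring F (ring_of_type_algebra :: 'a ring)"
    using F unfolding is_subfield_def by (intro R.subringI) auto
  then show "subfield F ring_of_type_algebra"
    using F unfolding is_subfield_def by (intro field.subfieldI'[OF field_from_type_algebra]) auto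
next
  assume F: "subfield F (ring_of_type_algebra :: 'a ring)"
  note F_props = subringE[OF subfieldE(1)[OF F]]
  have "x - y \<in> F" if "x \<in> F" "y \<in> F" for x y
    using F_props(7)[OF that(1) F_props(5)[OF that(2)]] by simp
  moreover have "inverse x \<in> F" if "x \<in> F" "x \<noteq> 0" for x
    using R.subfield_m_inv(1)[OF F, of x] that by simp
  ultimately show "is_subfield F"
    using F_props(2,3,6,7) unfolding is_subfield_def by auto
qed

lemma ex_map_eq_if_distinct:
  assumes "distinct xs" "length ys = length xs"
  shows "\<exists>f. ys = map f xs"
proof
  show "ys = map (\<lambda>x. the (map_of (zip xs ys) x)) xs"
    using assms by (intro nth_equalityI) (auto simp: map_of_zip_nth)
qed

lemma combine_map_eq_sum:
  "distinct Us \<Longrightarrow> R.combine (map c Us) Us = (\<Sum>x\<in>set Us. c x * x)"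
  by (induction Us) auto

lemma combine_restrict_eq_sum:
  assumes "distinct Us" "T \<subseteq> set Us"
  shows "R.combine (map (\<lambda>x. if x \<in> T then c x else 0) Us) Us = (\<Sum>x\<in>T. c x * x)"
proof -
  have "(\<Sum>x\<in>set Us. (if x \<in> T then c x else 0) * x) = (\<Sum>x\<in>T. c x * x)"
    by (rule sum.mono_neutral_cong_right) (use assms(2) in auto)
  then show ?thesis
    using assms(1) by (simp add: combine_map_eq_sum)
qed

lemma independent_iff_lin_indep_over:
  assumes F: "subfield F ring_of_type_algebra" and "distinct Us"
  shows "R.independent F Us \<longleftrightarrow> lin_indep_over F (set Us)"
proof
  assume indep: "R.independent F Us"
  show "lin_indep_over F (set Us)"
    unfolding lin_indep_over_def
  proof (intro allI impI ballI)
    fix T c x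
    assume T: "finite T" "T \<subseteq> set Us" "\<forall>x\<in>T. c x \<in> F" "(\<Sum>x\<in>T. c x * x) = 0" and "x \<in> T"
    let ?Ks = "map (\<lambda>x. if x \<in> T then c x else 0) Us"
    have "R.combine ?Ks Us = 0"
      using combine_restrict_eq_sum[OF \<open>distinct Us\<close> T(2)] T(4) by simp
    moreover have "set ?Ks \<subseteq> F"
      using T(3) R.subring_props(2)[OF F] by auto
    ultimately have "set (take (length Us) ?Ks) \<subseteq> {0}"
      using R.independent_imp_trivial_combine[OF F indep, of ?Ks] by simp
    then show "c x = 0"
      using \<open>x \<in> T\<close> T(2) by auto
  qed
next
  assume indep: "lin_indep_over F (set Us)"
  show "R.independent F Us"
  proof (rule ccontr)
    assume "R.dependent F Us"
    then obtain Ks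
      where Ks: "length Ks = length Us" "R.combine Ks Us = 0" "set Ks \<subseteq> F" "set Ks \<noteq> {0}"
      using R.dependent_imp_non_trivial_combine[OF F _ \<open>R.dependent F Us\<close>] by auto
    obtain c where c: "Ks = map c Us"
      using ex_map_eq_if_distinct[OF \<open>distinct Us\<close> Ks(1)] by blast
    have "(\<Sum>x\<in>set Us. c x * x) = 0" "\<forall>x\<in>set Us. c x \<in> F"
      using Ks(2,3) c combine_map_eq_sum[OF \<open>distinct Us\<close>] by auto
    then have "\<forall>x\<in>set Us. c x = 0"
      using indep finite_set[of Us] unfolding lin_indep_over_def by blast
    then have "set Ks \<subseteq> {0}"
      using c by auto
    then have "Ks = []"
      using Ks(4) by (simp add: subset_singleton_iff)
    with Ks(1) \<open>R.dependent F Us\<close> show False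
      by simp
  qed
qed

lemma Span_eq_span_over:
  assumes F: "subfield F ring_of_type_algebra" and "distinct Us"
  shows "R.Span F Us = span_over F (set Us)"
proof
  show "R.Span F Us \<subseteq> span_over F (set Us)"
  proof
    fix v
    assume "v \<in> R.Span F Us"
    then obtain Ks where Ks: "set Ks \<subseteq> F" "length Ks = length Us" "v = R.combine Ks Us"
      using R.Span_mem_iff_length_version[OF F] by auto
    moreover obtain c where "Ks = map c Us"
      using ex_map_eq_if_distinct[OF \<open>distinct Us\<close> Ks(2)] by blast
    ultimately show "v \<in> span_over F (set Us)"
      unfolding span_over_def using \<open>distinct Us\<close> by (auto simp: combine_map_eq_sum)
  qed
  show "span_over F (set Us) \<subseteq> R.Span F Us"
  proof
    fix v
    assume "v \<in> span_over F (set Us)"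
    then obtain T c where T: "T \<subseteq> set Us" "\<forall>x\<in>T. c x \<in> F" "v = (\<Sum>x\<in>T. c x * x)"
      unfolding span_over_def by blast
    let ?Ks = "map (\<lambda>x. if x \<in> T then c x else 0) Us"
    have "v = R.combine ?Ks Us"
      using combine_restrict_eq_sum[OF \<open>distinct Us\<close> T(1)] T(3) by simp
    moreover have "set ?Ks \<subseteq> F"
      using T(2) R.subring_props(2)[OF F] by auto
    ultimately show "v \<in> R.Span F Us"
      by (intro R.Span_mem_iff_length_version[OF F, THEN iffD2] exI[of _ ?Ks]) auto
  qed
qed

lemma lin_disjoint_iff_independent:
  assumes K: "subfield K ring_of_type_algebra" and E: "subfield E ring_of_type_algebra"
  shows "lin_disjoint K M E \<longleftrightarrow>
    (\<forall>Us. set Us \<subseteq> M \<longrightarrow> R.independent K Us \<longrightarrow> R.independent E Us)"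
proof
  assume disjoint: "lin_disjoint K M E"
  show "\<forall>Us. set Us \<subseteq> M \<longrightarrow> R.independent K Us \<longrightarrow> R.independent E Us"
  proof (intro allI impI)
    fix Us
    assume Us: "set Us \<subseteq> M" "R.independent K Us"
    then have "distinct Us"
      using R.independent_distinct[OF K] by blast
    with Us have "lin_indep_over E (set Us)"
      using disjoint independent_iff_lin_indep_over[OF K] unfolding lin_disjoint_def by blast
    with \<open>distinct Us\<close> show "R.independent E Us"
      using independent_iff_lin_indep_over[OF E] by blast
  qed
next
  assume lists: "\<forall>Us. set Us \<subseteq> M \<longrightarrow> R.independent K Us \<longrightarrow> R.independent E Us"
  show "lin_disjoint K M E"
    unfolding lin_disjoint_def
  proof (intro allI impI)
    fix S
    assume S: "S \<subseteq> M" "lin_indep_over K S"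
    show "lin_indep_over E S"
      unfolding lin_indep_over_def
    proof (intro allI impI)
      fix T c
      assume T: "finite T" "T \<subseteq> S" "\<forall>x\<in>T. c x \<in> E" "(\<Sum>x\<in>T. c x * x) = 0"
      obtain Us where Us: "set Us = T" "distinct Us"
        using finite_distinct_list[OF T(1)] by blast
      have "lin_indep_over K T"
        using S(2) T(2) unfolding lin_indep_over_def by blast
      then have "R.independent K Us"
        using independent_iff_lin_indep_over[OF K \<open>distinct Us\<close>] Us(1) by simp
      then have "R.independent E Us"
        using lists S(1) T(2) Us(1) by blast
      then have "lin_indep_over E T"
        using independent_iff_lin_indep_over[OF E \<open>distinct Us\<close>] Us(1) by simp
      then show "\<forall>x\<in>T. c x = 0"
        using T unfolding lin_indep_over_def by blast
    qed
  qed
qed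

lemma finite_ext_iff_finite_dimension:
  "finite_ext K E \<longleftrightarrow> subfield K ring_of_type_algebra \<and> subfield E ring_of_type_algebra \<and>
     K \<subseteq> E \<and> R.finite_dimension K E"
proof
  assume ext: "finite_ext K E"
  then have K: "subfield K ring_of_type_algebra" and "subfield E ring_of_type_algebra" "K \<subseteq> E"
    unfolding finite_ext_def field_ext_def is_subfield_iff_subfield by auto
  moreover obtain B where "finite B" "span_over K B = E"
    using ext unfolding finite_ext_def by blast
  moreover obtain Us where "set Us = B" "distinct Us"
    using finite_distinct_list[OF \<open>finite B\<close>] by blast
  ultimately show "subfield K ring_of_type_algebra \<and> subfield E ring_of_type_algebra \<and>
     K \<subseteq> E \<and> R.finite_dimension K E"
    using R.Span_finite_dimension[OF K, of Us] Span_eq_span_over[OF K] by auto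
next
  assume "subfield K ring_of_type_algebra \<and> subfield E ring_of_type_algebra \<and>
     K \<subseteq> E \<and> R.finite_dimension K E"
  then have K: "subfield K ring_of_type_algebra" and "subfield E ring_of_type_algebra" "K \<subseteq> E"
    and "R.finite_dimension K E"
    by auto
  then obtain n where "R.dimension n K E"
    by blast
  then obtain Vs where Vs: "R.independent K Vs" "R.Span K Vs = E"
    using R.exists_base[OF K] by blast
  then have "span_over K (set Vs) = E" "set Vs \<subseteq> E"
    using Span_eq_span_over[OF K R.independent_distinct[OF K Vs(1)]] R.Span_base_incl[OF K, of Vs]
    by auto
  with K \<open>subfield E ring_of_type_algebra\<close> \<open>K \<subseteq> E\<close> show "finite_ext K E"
    unfolding finite_ext_def field_ext_def is_subfield_iff_subfield by blast
qed

lemma eval_eq_poly: "R.eval P x = poly (Poly (rev P)) (x::'a::field)"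
proof (induction P)
  case (Cons a P)
  have "R.eval (a # P) x = a * x ^ length P + R.eval P x"
    by simp
  with Cons show ?case
    by (simp add: Poly_append poly_monom algebra_simps)
qed simp

lemma algebraic_over_iff:
  assumes K: "subfield K ring_of_type_algebra"
  shows "algebraic_over K x \<longleftrightarrow> (R.algebraic over K) x"
proof
  assume "algebraic_over K x"
  then obtain p :: "'a poly" where p: "p \<noteq> 0" "\<forall>i. Polynomial.coeff p i \<in> K" "poly p x = 0"
    unfolding algebraic_over_def by blast
  let ?P = "rev (coeffs p)"
  have "?P \<in> carrier (K[X]\<^bsub>ring_of_type_algebra\<^esub>)"
    using p(1,2) unfolding sym[OF univ_poly_carrier] polynomial_def
    by (auto simp: coeffs_def hd_rev last_coeffs_eq_coeff_degree)
  moreover have "?P \<noteq> []"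
    using p(1) by simp
  moreover have "R.eval ?P x = \<zero>\<^bsub>ring_of_type_algebra\<^esub>"
    using p(3) by (simp add: eval_eq_poly)
  ultimately show "(R.algebraic over K) x"
    by (rule R.algebraicI)
next
  assume "(R.algebraic over K) x"
  then obtain P where P: "P \<in> carrier (K[X]\<^bsub>ring_of_type_algebra\<^esub>)" "P \<noteq> []"
    "R.eval P x = \<zero>\<^bsub>ring_of_type_algebra\<^esub>"
    using R.algebraicE[OF subfieldE(1)[OF K]] by auto
  then have "set P \<subseteq> K" "hd P \<noteq> 0"
    unfolding sym[OF univ_poly_carrier] polynomial_def by auto
  then have "coeffs (Poly (rev P)) = rev P"
    using P(2) by (cases P) auto
  then have "Poly (rev P) \<noteq> 0"
    using P(2) by (metis Nil_is_rev_conv coeffs_0_eq_Nil)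
  moreover have "Polynomial.coeff (Poly (rev P)) i \<in> K" for i
  proof -
    have "Polynomial.coeff (Poly (rev P)) i \<in> insert 0 (set P)"
      using range_nth_default[of 0 "rev P"] by (metis coeff_Poly_eq rangeI set_rev)
    then show ?thesis
      using \<open>set P \<subseteq> K\<close> R.subring_props(2)[OF K] by auto
  qed
  ultimately show "algebraic_over K x"
    using P(3) unfolding algebraic_over_def by (auto simp: eval_eq_poly)
qed

section \<open>Disjointness and the compositum\<close>

lemma Span_one:
  assumes "subfield K ring_of_type_algebra"
  shows "R.Span K [1] = K"
proof -
  have "R.Span K [1] = R.line_extension K 1 {0}"
    by (simp add: R.Span.simps)
  also have "\<dots> = K"
    unfolding set_eq_iff R.line_extension_mem_iff by simp
  finally show ?thesis .
qed

lemma lin_disjoint_Int_subset: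
  assumes K: "is_subfield K" and K': "is_subfield K'" and L: "is_subfield L"
    and "lin_disjoint K K' L"
  shows "K' \<inter> L \<subseteq> K"
proof
  fix a
  assume a: "a \<in> K' \<inter> L"
  show "a \<in> K"
  proof (rule ccontr)
    note subfields = assms(1-3)[unfolded is_subfield_iff_subfield]
    assume "a \<notin> K"
    have "R.independent K [1]"
      using R.li_Cons[of 1 K "[]"] by (simp add: R.Span.simps)
    then have "R.independent K [a, 1]"
      using R.li_Cons[of a K "[1]"] Span_one[OF subfields(1)] \<open>a \<notin> K\<close> by simp
    moreover have "set [a, 1] \<subseteq> K'"
      using a K' unfolding is_subfield_def by auto
    ultimately have "R.independent L [a, 1]"
      using \<open>lin_disjoint K K' L\<close> lin_disjoint_iff_independent[OF subfields(1,3)] by blast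
    then show False
      using a Span_one[OF subfields(3)] R.independent_backwards(1) by blast
  qed
qed

lemma is_subfield_compositum: "is_subfield (compositum A B)"
  unfolding compositum_def is_subfield_def by auto

lemma subset_compositum: "A \<subseteq> compositum A B" "B \<subseteq> compositum A B"
  unfolding compositum_def by auto

lemma compositum_least:
  "is_subfield F \<Longrightarrow> A \<subseteq> F \<Longrightarrow> B \<subseteq> F \<Longrightarrow> compositum A B \<subseteq> F"
  unfolding compositum_def by auto

lemma algebraic_ext_compositum:
  assumes L: "algebraic_ext K L" and K': "field_ext K K'"
  shows "algebraic_ext K' (compositum L K')"
proof -
  have K: "subfield K ring_of_type_algebra" and K'_sub: "subfield K' ring_of_type_algebra"
    using K' unfolding field_ext_def is_subfield_iff_subfield by auto
  define A where "A = {x \<in> carrier ring_of_type_algebra. (R.algebraic over K') x}"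
  have "subfield A ring_of_type_algebra"
    unfolding A_def by (rule field.subfield_of_algebraics[OF field_from_type_algebra K'_sub])
  moreover have "L \<subseteq> A"
  proof
    fix x
    assume "x \<in> L"
    then have "(R.algebraic over K) x"
      using L algebraic_over_iff[OF K] unfolding algebraic_ext_def by blast
    then show "x \<in> A"
      unfolding A_def using R.algebraic_mono K' unfolding field_ext_def by auto
  qed
  moreover have "K' \<subseteq> A"
    unfolding A_def using R.algebraic_self[OF subfieldE(1)[OF K'_sub]] by auto
  ultimately have "compositum L K' \<subseteq> A"
    by (intro compositum_least) (simp_all add: is_subfield_iff_subfield)
  then show ?thesis
    using K' is_subfield_compositum subset_compositum(2)[of K' L] algebraic_over_iff[OF K'_sub]
    unfolding algebraic_ext_def field_ext_def A_def by auto
qed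

lemma finite_ext_trans: "finite_ext K K' \<Longrightarrow> finite_ext K' E \<Longrightarrow> finite_ext K E"
  using R.telescopic_base_dim(1) unfolding finite_ext_iff_finite_dimension by blast

lemma lin_disjoint_subset: "lin_disjoint K M E \<Longrightarrow> M' \<subseteq> M \<Longrightarrow> lin_disjoint K M' E"
  unfolding lin_disjoint_def by blast

lemma simple_extension_field_ext:
  assumes "field_ext K F" "a \<in> F" "algebraic_over K a"
  shows "field_ext K (R.simple_extension K a)" "a \<in> R.simple_extension K a"
    and "R.simple_extension K a \<subseteq> F"
proof -
  have K: "subfield K ring_of_type_algebra" and F: "subfield F ring_of_type_algebra"
    using assms(1) unfolding field_ext_def is_subfield_iff_subfield by auto
  have "subfield (R.simple_extension K a) ring_of_type_algebra"
    using R.simple_extension_is_subfield[OF K] assms(3) algebraic_over_iff[OF K] by simp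
  moreover have "K \<subseteq> R.simple_extension K a"
    by (rule R.simple_extension_incl) simp_all
  ultimately show "field_ext K (R.simple_extension K a)"
    using K unfolding field_ext_def is_subfield_iff_subfield by blast
  show "a \<in> R.simple_extension K a"
    by (rule R.simple_extension_mem[OF subfieldE(1)[OF K]]) simp
  show "R.simple_extension K a \<subseteq> F"
    using R.simple_extension_subring_incl[OF subfieldE(1)[OF F]] assms(1,2)
    unfolding field_ext_def by blast
qed

lemma lin_disjoint_simple_extension_base_change:
  assumes "field_ext K K'" "field_ext K' E" "algebraic_over K a"
    and "lin_disjoint K (R.simple_extension K a) E"
  shows "lin_disjoint K' (R.simple_extension K' a) E"
proof -
  have K: "subfield K ring_of_type_algebra" and K': "subfield K' ring_of_type_algebra"
    and E: "subfield E ring_of_type_algebra" and "K \<subseteq> K'" "K' \<subseteq> E"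
    using assms(1,2) unfolding field_ext_def is_subfield_iff_subfield by auto
  show ?thesis
    using assms(3,4) algebraic_over_iff[OF K]
      R.simple_extension_independent_over_superfield[OF K K' E \<open>K \<subseteq> K'\<close> \<open>K' \<subseteq> E\<close>]
    unfolding lin_disjoint_iff_independent[OF K E] lin_disjoint_iff_independent[OF K' E] by simp
qed

lemma lin_disjoint_simple_extension_witness:
  assumes K': "field_ext K K'" and E: "field_ext K' E" and C: "algebraic_ext K' C"
    and M: "algebraic_ext K M" "M \<subseteq> C" "lin_disjoint K M E"
    and a: "a \<in> M" "a \<notin> K'"
  shows "\<exists>M'. is_subfield M' \<and> K' \<subset> M' \<and> M' \<subseteq> C \<and> lin_disjoint K' M' E"
proof -
  have alg_K: "algebraic_over K a" and alg_K': "algebraic_over K' a" and "a \<in> C"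
    using M C a unfolding algebraic_ext_def by blast+
  have "field_ext K M"
    using M(1) unfolding algebraic_ext_def by blast
  then have "lin_disjoint K (R.simple_extension K a) E"
    using lin_disjoint_subset[OF M(3) simple_extension_field_ext(3)[OF _ a(1) alg_K]] by blast
  then have "lin_disjoint K' (R.simple_extension K' a) E"
    by (rule lin_disjoint_simple_extension_base_change[OF K' E alg_K])
  moreover have "field_ext K' C"
    using C unfolding algebraic_ext_def by blast
  note M' = simple_extension_field_ext[OF this \<open>a \<in> C\<close> alg_K']
  ultimately show ?thesis
    using M' a(2) unfolding field_ext_def by blast
qed

theorem lemma2p2:
  fixes K L K' :: "'a::field_char_0 set"
  assumes "alg_closed_type TYPE('a)"
    and "vast K L"
    and "finite_ext K K'"
    and "lin_disjoint K K' L"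
  shows "vast K' (compositum L K')"
proof -
  have L: "algebraic_ext K L" and "L \<noteq> K"
    and vast_L: "\<And>E. finite_ext K E \<Longrightarrow>
      \<exists>M. is_subfield M \<and> K \<subset> M \<and> M \<subseteq> L \<and> lin_disjoint K M E"
    using assms(2) unfolding vast_def by auto
  have K': "field_ext K K'"
    using assms(3) unfolding finite_ext_def by blast
  have not_in_K': "a \<notin> K'" if "a \<in> L" "a \<notin> K" for a
    using lin_disjoint_Int_subset[OF _ _ _ assms(4)] that L K'
    unfolding algebraic_ext_def field_ext_def by blast
  define C where "C = compositum L K'"
  have C: "algebraic_ext K' C"
    unfolding C_def by (rule algebraic_ext_compositum[OF L K'])
  moreover have "C \<noteq> K'"
    using \<open>L \<noteq> K\<close> not_in_K' subset_compositum(1) L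
    unfolding C_def algebraic_ext_def field_ext_def by blast
  moreover have "\<exists>M. is_subfield M \<and> K' \<subset> M \<and> M \<subseteq> C \<and> lin_disjoint K' M E"
    if E: "finite_ext K' E" for E
  proof -
    obtain M where M: "is_subfield M" "K \<subset> M" "M \<subseteq> L" "lin_disjoint K M E"
      using vast_L finite_ext_trans[OF assms(3) E] by blast
    then obtain a where a: "a \<in> M" "a \<notin> K"
      by blast
    have "field_ext K' E"
      using E unfolding finite_ext_def by blast
    moreover have "algebraic_ext K M"
      using L M(1-3) unfolding algebraic_ext_def field_ext_def by blast
    moreover have "M \<subseteq> C"
      using M(3) subset_compositum(1) unfolding C_def by blast
    ultimately show ?thesis
      using lin_disjoint_simple_extension_witness[OF K' _ C _ _ M(4) a(1)] not_in_K' a M(3)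
      by blast
  qed
  ultimately show ?thesis
    unfolding vast_def C_def by blast
qed

end
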